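(* Let $\hat\Pi_t=\hat\sigma_t(M_t)$, $t=0,\dots,T$, be an approximate information state with parameters $\epsilon_t,\delta_t,\lambda_t$. For $t=0,\dots,T$ let $L_{\hat V_{t+1}}$ be a Lipschitz constant of $\hat V_{t+1}$ (with $L_{\hat V_{T+1}}=0$), and define $\alpha_{T+1}:=0$ and $\alpha_t:=\max(\epsilon_t,\ \alpha_{t+1}+L_{\hat V_{t+1}}\delta_t)$. Then for all $t=0,\dots,T$, $m_t\in[[M_t]]$, $u_t\in[[U_t]]$: $$|Q_t(m_t,u_t)-\hat Q_t(\hat\sigma_t(m_t),u_t)|\le\alpha_t,\qquad |V_t(m_t)-\hat V_t(\hat\sigma_t(m_t))|\le\alpha_t.$$
   Context: Uncertain variables: fix a sample space $\Omega$; an uncertain variable with values in a set $\mathcal{X}$ is a map $X:\Omega\to\mathcal{X}$, with marginal range $[[X]]:=\{X(\omega):\omega\in\Omega\}$; uncertain variables are independent if their joint range is the product of their marginal ranges. Hausdorff distance: for nonempty subsets $\mathcal{A},\mathcal{B}$ of a metric space $(\mathcal{S},\eta)$, $\mathcal{H}(\mathcal{A},\mathcal{B}):=\max\{\sup_{a\in\mathcal{A}}\inf_{b\in\mathcal{B}}\eta(a,b),\sup_{b\in\mathcal{B}}\inf_{a\in\mathcal{A}}\eta(a,b)\}$. A function $f:\mathcal{X}\to\mathcal{Y}$ between metric spaces is $L$-invertible if there is $L_{f^{-1}}\ge0$ with $\mathcal{H}(f^{-1}(y^1),f^{-1}(y^2))\le L_{f^{-1}}\eta(y^1,y^2)$ for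 all $y^1,y^2$. System: horizon $T\in\mathbb{N}$. For $t=0,\dots,T$ there are independent disturbances $W_t\in\mathcal{W}_t$, actions $U_t\in\mathcal{U}_t$ taking values in a given set $[[U_t]]\subseteq\mathcal{U}_t$, observations $Y_0=h_0(W_0)$, $Y_{t+1}=h_{t+1}(W_{0:t},U_{0:t})$, and costs $C_t=d_t(W_{0:t},U_{0:t})\in\mathcal{C}_t\subset\mathbb{R}_{\ge0}$. Standing assumptions: $\mathcal{U}_t,\mathcal{W}_t,\mathcal{Y}_t$ are bounded subsets of a metric space $(\mathcal{S},\eta)$ (product spaces carry a metric also denoted $\eta$), the $\mathcal{C}_t$ are bounded subsets of $\mathbb{R}_{\ge0}$, each $h_t$ is Lipschitz and $L$-invertible, each $d_t$ is Lipschitz. The memory is $M_t=(Y_{0:t},U_{0:t-1})\in\mathcal{M}_t:=\prod_{\ell=0}^t\mathcal{Y}_\ell\times\prod_{\ell=0}^{t-1}\mathcal{U}_\ell$. Strategy-independent ranges: for $m_t=(y_{0:t},u_{0:t-1})$ let $\mathcal{W}(m_t)$ be the set of $w_{0:t}\in\prod_{\ell=0}^t[[W_\ell]]$ with $y_0=h_0(w_0)$ and $y_\ell=h_\ell(w_{0:\ell-1},u_{0:\ell-1})$ for $\ell=1,\dots,t$. Let $[[M_t]]$ be the set of such $m_t$ with $u_\ell\in[[U_\ell]]$ and $\mathcal{W}(m_t)\neq\emptyset$. For $m_t\in[[M_t]]$, $u_t\in[[U_t]]$: $[[C_t|m_t,u_t]]:=\{d_t(w_{0:t},u_{0:t}):w_{0:t}\in\mathcal{W}(m_t)\}$,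 $[[Y_{t+1}|m_t,u_t]]:=\{h_{t+1}(w_{0:t},u_{0:t}):w_{0:t}\in\mathcal{W}(m_t)\}$, $[[M_{t+1}|m_t,u_t]]:=\{(m_t,u_t,y_{t+1}):y_{t+1}\in[[Y_{t+1}|m_t,u_t]]\}$. For functions $\hat\sigma_t$ on $\mathcal{M}_t$ and $\hat\Pi_t=\hat\sigma_t(M_t)$: $[[\hat\Pi_t]]:=\hat\sigma_t([[M_t]])$, $[[M_t|\hat\pi_t]]:=\{m_t\in[[M_t]]:\hat\sigma_t(m_t)=\hat\pi_t\}$, $[[\hat\Pi_{t+1}|m_t,u_t]]:=\{\hat\sigma_{t+1}(m_{t+1}):m_{t+1}\in[[M_{t+1}|m_t,u_t]]\}$, and for $Z\in\{C_t,Y_{t+1},\hat\Pi_{t+1}\}$, $[[Z|\hat\pi_t,u_t]]:=\bigcup_{m_t\in[[M_t|\hat\pi_t]]}[[Z|m_t,u_t]]$. Memory-based DP: $V_{T+1}\equiv0$ and for $t=T,\dots,0$, $Q_t(m_t,u_t):=\max\{\sup_{c\in[[C_t|m_t,u_t]]}c,\ \sup_{m_{t+1}\in[[M_{t+1}|m_t,u_t]]}V_{t+1}(m_{t+1})\}$, $V_t(m_t):=\inf_{u_t\in[[U_t]]}Q_t(m_t,u_t)$. Approximate information state: $\hat\Pi_t=\hat\sigma_t(M_t)$ with $L$-invertible $\hat\sigma_t:\mathcal{M}_t\to\hat{\mathcal{P}}_t$, $\hat{\mathcal{P}}_t$ bounded with metric $\eta$, such that for each $t=0,\dots,T$ there are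 $\epsilon_t,\delta_t,\lambda_t\ge0$ with, for all $m_t\in[[M_t]]$, $u_t\in[[U_t]]$: (1) $|\sup_{c\in[[C_t|m_t,u_t]]}c-\sup_{c\in[[C_t|\hat\sigma_t(m_t),u_t]]}c|\le\epsilon_t$; (2) $\mathcal{H}([[\hat\Pi_{t+1}|m_t,u_t]],[[\hat\Pi_{t+1}|\hat\sigma_t(m_t),u_t]])\le\delta_t$; (3) for all $\hat\pi_t^1,\hat\pi_t^2\in[[\hat\Pi_t]]$, $\mathcal{H}([[\hat\Pi_{t+1}|\hat\pi_t^1,u_t]],[[\hat\Pi_{t+1}|\hat\pi_t^2,u_t]])\le\lambda_t\,\eta(\hat\pi_t^1,\hat\pi_t^2)$. Approximate DP: $\hat V_{T+1}\equiv0$ and for $t=T,\dots,0$, $\hat\pi_t\in[[\hat\Pi_t]]$, $u_t\in[[U_t]]$: $\hat Q_t(\hat\pi_t,u_t):=\max\{\sup_{c\in[[C_t|\hat\pi_t,u_t]]}c,\ \sup_{\hat\pi_{t+1}\in[[\hat\Pi_{t+1}|\hat\pi_t,u_t]]}\hat V_{t+1}(\hat\pi_{t+1})\}$, $\hat V_t(\hat\pi_t):=\inf_{u_t\in[[U_t]]}\hat Q_t(\hat\pi_t,u_t)$. (Each $\hat V_t$ is Lipschitz on $[[\hat\Pi_t]]$.) *)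

theory Defs
  imports "HOL-Analysis.Analysis"
begin

text \<open>Disturbance / action / observation histories are lists; element l of a list is the value at time l.
  Parameters:
    W  :: nat => 'w set      marginal range [[W_t]] of the disturbance W_t
    U  :: nat => 'u set      the given action set [[U_t]]
    h0 :: 'w => 'y           Y_0 = h_0(W_0)
    h  :: nat => 'w list => 'u list => 'y    Y_l = h l (w_0..w_(l-1)) (u_0..u_(l-1)), l >= 1
    d  :: nat => 'w list => 'u list => real  C_t = d t (w_0..w_t) (u_0..u_t)
  A memory m_t = (y_{0:t}, u_{0:t-1}) is a pair of lists of lengths t+1 and t.\<close>

type_synonym ('y, 'u) mem = "'y list \<times> 'u list"

definition hausdorff :: "'a::metric_space set \<Rightarrow> 'a set \<Rightarrow> real" where
  "hausdorff A B = max (SUP a\<in>A. infdist a B) (SUP b\<in>B. infdist b A)"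

definition Wm :: "(nat \<Rightarrow> 'w set) \<Rightarrow> ('w \<Rightarrow> 'y) \<Rightarrow> (nat \<Rightarrow> 'w list \<Rightarrow> 'u list \<Rightarrow> 'y)
    \<Rightarrow> ('y, 'u) mem \<Rightarrow> 'w list set" where
  "Wm W h0 h m = {w. length w = length (fst m) \<and> (\<forall>l<length w. w ! l \<in> W l)
      \<and> fst m ! 0 = h0 (w ! 0)
      \<and> (\<forall>l. 0 < l \<and> l < length w \<longrightarrow> fst m ! l = h l (take l w) (take l (snd m)))}"

definition Mrange :: "(nat \<Rightarrow> 'w set) \<Rightarrow> (nat \<Rightarrow> 'u set) \<Rightarrow> ('w \<Rightarrow> 'y)
    \<Rightarrow> (nat \<Rightarrow> 'w list \<Rightarrow> 'u list \<Rightarrow> 'y) \<Rightarrow> nat \<Rightarrow> ('y, 'u) mem set" where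
  "Mrange W U h0 h t = {m. length (fst m) = Suc t \<and> length (snd m) = t
      \<and> (\<forall>l<t. snd m ! l \<in> U l) \<and> Wm W h0 h m \<noteq> {}}"

definition Ccond :: "(nat \<Rightarrow> 'w set) \<Rightarrow> ('w \<Rightarrow> 'y) \<Rightarrow> (nat \<Rightarrow> 'w list \<Rightarrow> 'u list \<Rightarrow> 'y)
    \<Rightarrow> (nat \<Rightarrow> 'w list \<Rightarrow> 'u list \<Rightarrow> real) \<Rightarrow> nat \<Rightarrow> ('y, 'u) mem \<Rightarrow> 'u \<Rightarrow> real set" where
  "Ccond W h0 h d t m u = (\<lambda>w. d t w (snd m @ [u])) ` Wm W h0 h m"

definition Ycond :: "(nat \<Rightarrow> 'w set) \<Rightarrow> ('w \<Rightarrow> 'y) \<Rightarrow> (nat \<Rightarrow> 'w list \<Rightarrow> 'u list \<Rightarrow> 'y)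
    \<Rightarrow> nat \<Rightarrow> ('y, 'u) mem \<Rightarrow> 'u \<Rightarrow> 'y set" where
  "Ycond W h0 h t m u = (\<lambda>w. h (Suc t) w (snd m @ [u])) ` Wm W h0 h m"

definition Mnext :: "(nat \<Rightarrow> 'w set) \<Rightarrow> ('w \<Rightarrow> 'y) \<Rightarrow> (nat \<Rightarrow> 'w list \<Rightarrow> 'u list \<Rightarrow> 'y)
    \<Rightarrow> nat \<Rightarrow> ('y, 'u) mem \<Rightarrow> 'u \<Rightarrow> ('y, 'u) mem set" where
  "Mnext W h0 h t m u = (\<lambda>y. (fst m @ [y], snd m @ [u])) ` Ycond W h0 h t m u"

text \<open>Memory-based DP. Vk k is V_{T+1-k}.\<close>
primrec Vk :: "(nat \<Rightarrow> 'w set) \<Rightarrow> (nat \<Rightarrow> 'u set) \<Rightarrow> ('w \<Rightarrow> 'y)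
    \<Rightarrow> (nat \<Rightarrow> 'w list \<Rightarrow> 'u list \<Rightarrow> 'y) \<Rightarrow> (nat \<Rightarrow> 'w list \<Rightarrow> 'u list \<Rightarrow> real)
    \<Rightarrow> nat \<Rightarrow> nat \<Rightarrow> ('y, 'u) mem \<Rightarrow> real" where
  "Vk W U h0 h d T 0 = (\<lambda>m. 0)"
| "Vk W U h0 h d T (Suc k) = (\<lambda>m. INF u\<in>U (T - k).
      max (Sup (Ccond W h0 h d (T - k) m u)) (SUP m'\<in>Mnext W h0 h (T - k) m u. Vk W U h0 h d T k m'))"

definition Vfun :: "(nat \<Rightarrow> 'w set) \<Rightarrow> (nat \<Rightarrow> 'u set) \<Rightarrow> ('w \<Rightarrow> 'y)
    \<Rightarrow> (nat \<Rightarrow> 'w list \<Rightarrow> 'u list \<Rightarrow> 'y) \<Rightarrow> (nat \<Rightarrow> 'w list \<Rightarrow> 'u list \<Rightarrow> real)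
    \<Rightarrow> nat \<Rightarrow> nat \<Rightarrow> ('y, 'u) mem \<Rightarrow> real" where
  "Vfun W U h0 h d T t = Vk W U h0 h d T (Suc T - t)"

definition Qfun :: "(nat \<Rightarrow> 'w set) \<Rightarrow> (nat \<Rightarrow> 'u set) \<Rightarrow> ('w \<Rightarrow> 'y)
    \<Rightarrow> (nat \<Rightarrow> 'w list \<Rightarrow> 'u list \<Rightarrow> 'y) \<Rightarrow> (nat \<Rightarrow> 'w list \<Rightarrow> 'u list \<Rightarrow> real)
    \<Rightarrow> nat \<Rightarrow> nat \<Rightarrow> ('y, 'u) mem \<Rightarrow> 'u \<Rightarrow> real" where
  "Qfun W U h0 h d T t m u = max (Sup (Ccond W h0 h d t m u))
      (SUP m'\<in>Mnext W h0 h t m u. Vfun W U h0 h d T (Suc t) m')"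

definition Pirange :: "(nat \<Rightarrow> 'w set) \<Rightarrow> (nat \<Rightarrow> 'u set) \<Rightarrow> ('w \<Rightarrow> 'y)
    \<Rightarrow> (nat \<Rightarrow> 'w list \<Rightarrow> 'u list \<Rightarrow> 'y) \<Rightarrow> (nat \<Rightarrow> ('y, 'u) mem \<Rightarrow> 'p) \<Rightarrow> nat \<Rightarrow> 'p set" where
  "Pirange W U h0 h \<sigma> t = \<sigma> t ` Mrange W U h0 h t"

definition Mofpi :: "(nat \<Rightarrow> 'w set) \<Rightarrow> (nat \<Rightarrow> 'u set) \<Rightarrow> ('w \<Rightarrow> 'y)
    \<Rightarrow> (nat \<Rightarrow> 'w list \<Rightarrow> 'u list \<Rightarrow> 'y) \<Rightarrow> (nat \<Rightarrow> ('y, 'u) mem \<Rightarrow> 'p) \<Rightarrow> nat \<Rightarrow> 'p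
    \<Rightarrow> ('y, 'u) mem set" where
  "Mofpi W U h0 h \<sigma> t p = {m \<in> Mrange W U h0 h t. \<sigma> t m = p}"

definition Pinext :: "(nat \<Rightarrow> 'w set) \<Rightarrow> ('w \<Rightarrow> 'y) \<Rightarrow> (nat \<Rightarrow> 'w list \<Rightarrow> 'u list \<Rightarrow> 'y)
    \<Rightarrow> (nat \<Rightarrow> ('y, 'u) mem \<Rightarrow> 'p) \<Rightarrow> nat \<Rightarrow> ('y, 'u) mem \<Rightarrow> 'u \<Rightarrow> 'p set" where
  "Pinext W h0 h \<sigma> t m u = \<sigma> (Suc t) ` Mnext W h0 h t m u"

definition CcondPi :: "(nat \<Rightarrow> 'w set) \<Rightarrow> (nat \<Rightarrow> 'u set) \<Rightarrow> ('w \<Rightarrow> 'y)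
    \<Rightarrow> (nat \<Rightarrow> 'w list \<Rightarrow> 'u list \<Rightarrow> 'y) \<Rightarrow> (nat \<Rightarrow> 'w list \<Rightarrow> 'u list \<Rightarrow> real)
    \<Rightarrow> (nat \<Rightarrow> ('y, 'u) mem \<Rightarrow> 'p) \<Rightarrow> nat \<Rightarrow> 'p \<Rightarrow> 'u \<Rightarrow> real set" where
  "CcondPi W U h0 h d \<sigma> t p u = (\<Union>m\<in>Mofpi W U h0 h \<sigma> t p. Ccond W h0 h d t m u)"

definition PinextPi :: "(nat \<Rightarrow> 'w set) \<Rightarrow> (nat \<Rightarrow> 'u set) \<Rightarrow> ('w \<Rightarrow> 'y)
    \<Rightarrow> (nat \<Rightarrow> 'w list \<Rightarrow> 'u list \<Rightarrow> 'y)
    \<Rightarrow> (nat \<Rightarrow> ('y, 'u) mem \<Rightarrow> 'p) \<Rightarrow> nat \<Rightarrow> 'p \<Rightarrow> 'u \<Rightarrow> 'p set" where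
  "PinextPi W U h0 h \<sigma> t p u = (\<Union>m\<in>Mofpi W U h0 h \<sigma> t p. Pinext W h0 h \<sigma> t m u)"

text \<open>Approximate DP. Vhk k is hat V_{T+1-k}.\<close>
primrec Vhk :: "(nat \<Rightarrow> 'w set) \<Rightarrow> (nat \<Rightarrow> 'u set) \<Rightarrow> ('w \<Rightarrow> 'y)
    \<Rightarrow> (nat \<Rightarrow> 'w list \<Rightarrow> 'u list \<Rightarrow> 'y) \<Rightarrow> (nat \<Rightarrow> 'w list \<Rightarrow> 'u list \<Rightarrow> real)
    \<Rightarrow> (nat \<Rightarrow> ('y, 'u) mem \<Rightarrow> 'p) \<Rightarrow> nat \<Rightarrow> nat \<Rightarrow> 'p \<Rightarrow> real" where
  "Vhk W U h0 h d \<sigma> T 0 = (\<lambda>p. 0)"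
| "Vhk W U h0 h d \<sigma> T (Suc k) = (\<lambda>p. INF u\<in>U (T - k).
      max (Sup (CcondPi W U h0 h d \<sigma> (T - k) p u))
          (SUP p'\<in>PinextPi W U h0 h \<sigma> (T - k) p u. Vhk W U h0 h d \<sigma> T k p'))"

definition Vhat :: "(nat \<Rightarrow> 'w set) \<Rightarrow> (nat \<Rightarrow> 'u set) \<Rightarrow> ('w \<Rightarrow> 'y)
    \<Rightarrow> (nat \<Rightarrow> 'w list \<Rightarrow> 'u list \<Rightarrow> 'y) \<Rightarrow> (nat \<Rightarrow> 'w list \<Rightarrow> 'u list \<Rightarrow> real)
    \<Rightarrow> (nat \<Rightarrow> ('y, 'u) mem \<Rightarrow> 'p) \<Rightarrow> nat \<Rightarrow> nat \<Rightarrow> 'p \<Rightarrow> real" where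
  "Vhat W U h0 h d \<sigma> T t = Vhk W U h0 h d \<sigma> T (Suc T - t)"

definition Qhat :: "(nat \<Rightarrow> 'w set) \<Rightarrow> (nat \<Rightarrow> 'u set) \<Rightarrow> ('w \<Rightarrow> 'y)
    \<Rightarrow> (nat \<Rightarrow> 'w list \<Rightarrow> 'u list \<Rightarrow> 'y) \<Rightarrow> (nat \<Rightarrow> 'w list \<Rightarrow> 'u list \<Rightarrow> real)
    \<Rightarrow> (nat \<Rightarrow> ('y, 'u) mem \<Rightarrow> 'p) \<Rightarrow> nat \<Rightarrow> nat \<Rightarrow> 'p \<Rightarrow> 'u \<Rightarrow> real" where
  "Qhat W U h0 h d \<sigma> T t p u = max (Sup (CcondPi W U h0 h d \<sigma> t p u))
      (SUP p'\<in>PinextPi W U h0 h \<sigma> t p u. Vhat W U h0 h d \<sigma> T (Suc t) p')"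

definition is_AIS :: "(nat \<Rightarrow> 'w set) \<Rightarrow> (nat \<Rightarrow> 'u set) \<Rightarrow> ('w \<Rightarrow> 'y)
    \<Rightarrow> (nat \<Rightarrow> 'w list \<Rightarrow> 'u list \<Rightarrow> 'y) \<Rightarrow> (nat \<Rightarrow> 'w list \<Rightarrow> 'u list \<Rightarrow> real)
    \<Rightarrow> (nat \<Rightarrow> ('y, 'u) mem \<Rightarrow> 'p::metric_space) \<Rightarrow> nat
    \<Rightarrow> (nat \<Rightarrow> real) \<Rightarrow> (nat \<Rightarrow> real) \<Rightarrow> (nat \<Rightarrow> real) \<Rightarrow> bool" where
  "is_AIS W U h0 h d \<sigma> T \<epsilon> \<delta> lam \<longleftrightarrow>
     (\<forall>t. bounded (Pirange W U h0 h \<sigma> t)) \<and>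
     (\<forall>t\<le>T. 0 \<le> \<epsilon> t \<and> 0 \<le> \<delta> t \<and> 0 \<le> lam t \<and>
        (\<forall>m\<in>Mrange W U h0 h t. \<forall>u\<in>U t.
           \<bar>Sup (Ccond W h0 h d t m u) - Sup (CcondPi W U h0 h d \<sigma> t (\<sigma> t m) u)\<bar> \<le> \<epsilon> t \<and>
           hausdorff (Pinext W h0 h \<sigma> t m u) (PinextPi W U h0 h \<sigma> t (\<sigma> t m) u) \<le> \<delta> t) \<and>
        (\<forall>u\<in>U t. \<forall>p1\<in>Pirange W U h0 h \<sigma> t. \<forall>p2\<in>Pirange W U h0 h \<sigma> t.
           hausdorff (PinextPi W U h0 h \<sigma> t p1 u) (PinextPi W U h0 h \<sigma> t p2 u) \<le> lam t * dist p1 p2))"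

end

theory Submission
  imports Defs
begin

text \<open>Backward induction on t. The cost terms of Q and hat Q differ by at most \<epsilon> t
  (condition (1)). For the value terms, the supremum of V (t+1) over the successor memories
  differs by at most \<alpha> (t+1) from the supremum of hat V (t+1) over their compressions (induction
  hypothesis), and a Lipschitz function has suprema over two sets differing by at most its
  Lipschitz constant times their Hausdorff distance, which is at most \<delta> t (condition (2)).
  Since max and inf are 1-Lipschitz, the bound passes from these terms to Q and then to V.\<close>

lemma abs_max_diff_le: "\<bar>max (a::real) b - max c d\<bar> \<le> max \<bar>a - c\<bar> \<bar>b - d\<bar>"
  by (simp add: max_def abs_if)

lemma abs_SUP_diff_le:
  fixes f g :: "'a \<Rightarrow> real"
  assumes "A \<noteq> {}" and close: "\<And>x. x \<in> A \<Longrightarrow> \<bar>f x - g x\<bar> \<le> c" and g: "bdd_above (g ` A)"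
  shows "\<bar>Sup (f ` A) - Sup (g ` A)\<bar> \<le> c"
proof -
  obtain M where M: "\<And>x. x \<in> A \<Longrightarrow> g x \<le> M"
    using g by (auto simp: bdd_above_def)
  have f: "bdd_above (f ` A)"
  proof (rule bdd_aboveI2)
    show "f x \<le> M + c" if "x \<in> A" for x
      using M[OF that] close[OF that] by linarith
  qed
  have "Sup (f ` A) \<le> Sup (g ` A) + c"
  proof (rule cSUP_least[OF \<open>A \<noteq> {}\<close>])
    show "f x \<le> Sup (g ` A) + c" if "x \<in> A" for x
      using cSUP_upper[OF that g] close[OF that] by linarith
  qed
  moreover have "Sup (g ` A) \<le> Sup (f ` A) + c"
  proof (rule cSUP_least[OF \<open>A \<noteq> {}\<close>])
    show "g x \<le> Sup (f ` A) + c" if "x \<in> A" for x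
      using cSUP_upper[OF that f] close[OF that] by linarith
  qed
  ultimately show ?thesis by linarith
qed

lemma abs_INF_diff_le:
  fixes f g :: "'a \<Rightarrow> real"
  assumes "A \<noteq> {}" and close: "\<And>x. x \<in> A \<Longrightarrow> \<bar>f x - g x\<bar> \<le> c"
    and f: "bdd_below (f ` A)" and g: "bdd_below (g ` A)"
  shows "\<bar>Inf (f ` A) - Inf (g ` A)\<bar> \<le> c"
proof -
  have "Inf (f ` A) - c \<le> Inf (g ` A)"
  proof (rule cINF_greatest[OF \<open>A \<noteq> {}\<close>])
    show "Inf (f ` A) - c \<le> g x" if "x \<in> A" for x
      using cINF_lower[OF f that] close[OF that] by linarith
  qed
  moreover have "Inf (g ` A) - c \<le> Inf (f ` A)"
  proof (rule cINF_greatest[OF \<open>A \<noteq> {}\<close>])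
    show "Inf (g ` A) - c \<le> f x" if "x \<in> A" for x
      using cINF_lower[OF g that] close[OF that] by linarith
  qed
  ultimately show ?thesis by linarith
qed

lemma lipschitz_on_bounded_image:
  assumes lip: "L-lipschitz_on P f" and "bounded P"
  shows "bounded (f ` P)"
proof (cases "P = {}")
  case False
  then obtain a where a: "a \<in> P" by blast
  obtain e where e: "\<forall>x\<in>P. dist a x \<le> e"
    using \<open>bounded P\<close> bounded_any_center by blast
  have "dist (f a) (f x) \<le> L * e" if "x \<in> P" for x
  proof -
    have "dist (f a) (f x) \<le> L * dist a x"
      using lipschitz_onD[OF lip a that] .
    also have "\<dots> \<le> L * e"
      using e that lipschitz_on_nonneg[OF lip] by (simp add: mult_left_mono)
    finally show ?thesis .
  qed
  then show ?thesis
    unfolding bounded_any_center[where a = "f a"] by blast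
qed simp

lemma infdist_le_hausdorff:
  assumes "a \<in> A" "B \<noteq> {}" "bounded A"
  shows "infdist a B \<le> hausdorff A B"
proof -
  obtain b where b: "b \<in> B" using \<open>B \<noteq> {}\<close> by blast
  obtain e where e: "\<forall>x\<in>A. dist b x \<le> e"
    using \<open>bounded A\<close> bounded_any_center by blast
  have "bdd_above ((\<lambda>x. infdist x B) ` A)"
    using e b by (auto intro!: bdd_aboveI2 infdist_le2 simp: dist_commute)
  then have "infdist a B \<le> (SUP x\<in>A. infdist x B)"
    using \<open>a \<in> A\<close> by (rule cSUP_upper2) simp
  then show ?thesis
    unfolding hausdorff_def by linarith
qed

lemma hausdorff_commute: "hausdorff A B = hausdorff B A"
  unfolding hausdorff_def by (rule max.commute)

lemma lipschitz_on_le_SUP_plus_infdist: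
  fixes f :: "'a::metric_space \<Rightarrow> real"
  assumes lip: "L-lipschitz_on P f" and "a \<in> P" "B \<subseteq> P" "B \<noteq> {}" and bdd: "bdd_above (f ` B)"
  shows "f a \<le> Sup (f ` B) + L * infdist a B"
proof -
  have le_dist: "f a - Sup (f ` B) \<le> L * dist a b" if "b \<in> B" for b
    using lipschitz_onD[OF lip \<open>a \<in> P\<close>, of b] cSUP_upper[OF that bdd] that \<open>B \<subseteq> P\<close>
    by (auto simp: dist_real_def)
  have "f a - Sup (f ` B) \<le> L * infdist a B"
  proof (cases "L = 0")
    case True
    then show ?thesis using le_dist \<open>B \<noteq> {}\<close> by auto
  next
    case False
    then have "L > 0" using lipschitz_on_nonneg[OF lip] by simp
    have "(f a - Sup (f ` B)) / L \<le> infdist a B"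
      unfolding infdist_notempty[OF \<open>B \<noteq> {}\<close>]
      using le_dist \<open>L > 0\<close> \<open>B \<noteq> {}\<close>
      by (intro cINF_greatest) (auto simp: divide_le_eq mult.commute)
    then show ?thesis using \<open>L > 0\<close> by (simp add: divide_le_eq mult.commute)
  qed
  then show ?thesis by linarith
qed

lemma SUP_le_SUP_plus_hausdorff:
  fixes f :: "'a::metric_space \<Rightarrow> real"
  assumes lip: "L-lipschitz_on P f" and "bounded P" "A \<subseteq> P" "B \<subseteq> P" "A \<noteq> {}" "B \<noteq> {}"
  shows "Sup (f ` A) \<le> Sup (f ` B) + L * hausdorff A B"
proof (rule cSUP_least[OF \<open>A \<noteq> {}\<close>])
  fix a assume "a \<in> A"
  have "bdd_above (f ` B)"
    using lipschitz_on_bounded_image[OF lip \<open>bounded P\<close>] \<open>B \<subseteq> P\<close>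
    by (meson bounded_imp_bdd_above bdd_above_mono image_mono)
  then have "f a \<le> Sup (f ` B) + L * infdist a B"
    using lipschitz_on_le_SUP_plus_infdist[OF lip] \<open>a \<in> A\<close> assms(3-) by blast
  also have "\<dots> \<le> Sup (f ` B) + L * hausdorff A B"
    using infdist_le_hausdorff[OF \<open>a \<in> A\<close> \<open>B \<noteq> {}\<close>] bounded_subset[OF \<open>bounded P\<close> \<open>A \<subseteq> P\<close>]
      lipschitz_on_nonneg[OF lip] by (simp add: mult_left_mono)
  finally show "f a \<le> Sup (f ` B) + L * hausdorff A B" .
qed

lemma abs_SUP_diff_le_hausdorff:
  fixes f :: "'a::metric_space \<Rightarrow> real"
  assumes "L-lipschitz_on P f" "bounded P" "A \<subseteq> P" "B \<subseteq> P" "A \<noteq> {}" "B \<noteq> {}"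
  shows "\<bar>Sup (f ` A) - Sup (f ` B)\<bar> \<le> L * hausdorff A B"
  using SUP_le_SUP_plus_hausdorff[OF assms] SUP_le_SUP_plus_hausdorff[OF assms(1,2,4,3,6,5)]
  by (simp add: hausdorff_commute)

lemma Mnext_subset_Mrange:
  assumes "W (Suc t) \<noteq> {}" and m: "m \<in> Mrange W U h0 h t" and "u \<in> U t"
  shows "Mnext W h0 h t m u \<subseteq> Mrange W U h0 h (Suc t)"
proof
  fix m' assume "m' \<in> Mnext W h0 h t m u"
  then obtain w where w: "w \<in> Wm W h0 h m"
    and m': "m' = (fst m @ [h (Suc t) w (snd m @ [u])], snd m @ [u])"
    unfolding Mnext_def Ycond_def by auto
  obtain w' where "w' \<in> W (Suc t)" using assms(1) by blast
  have len: "length (fst m) = Suc t" "length (snd m) = t" "length w = Suc t"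
    using m w unfolding Mrange_def Wm_def by auto
  have w_in_W: "\<forall>l<Suc t. w ! l \<in> W l" and y0: "fst m ! 0 = h0 (w ! 0)"
    and y: "\<forall>l. 0 < l \<and> l < Suc t \<longrightarrow> fst m ! l = h l (take l w) (take l (snd m))"
    using w len unfolding Wm_def by auto
  have "w @ [w'] \<in> Wm W h0 h m'"
    unfolding Wm_def m' fst_conv snd_conv
  proof (intro CollectI conjI allI impI)
    fix l assume "l < length (w @ [w'])"
    then show "(w @ [w']) ! l \<in> W l"
      using w_in_W \<open>w' \<in> W (Suc t)\<close> len by (auto simp: nth_append less_Suc_eq)
  next
    fix l assume l: "0 < l \<and> l < length (w @ [w'])"
    show "(fst m @ [h (Suc t) w (snd m @ [u])]) ! l = h l (take l (w @ [w'])) (take l (snd m @ [u]))"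
    proof (cases "l = Suc t")
      case False
      then show ?thesis using y l len by (simp add: nth_append)
    qed (use len in \<open>simp add: nth_append\<close>)
  qed (use y0 len in \<open>simp_all add: nth_append\<close>)
  then show "m' \<in> Mrange W U h0 h (Suc t)"
    using m \<open>u \<in> U t\<close> len unfolding Mrange_def m' by (auto simp: nth_append less_Suc_eq)
qed

lemma Mnext_nonempty: "m \<in> Mrange W U h0 h t \<Longrightarrow> Mnext W h0 h t m u \<noteq> {}"
  unfolding Mrange_def Mnext_def Ycond_def by auto

lemma Ccond_subset_cost_bounds:
  assumes cost: "\<forall>w us. length w = Suc t \<and> length us = Suc t
          \<and> (\<forall>l\<le>t. w ! l \<in> W l \<and> us ! l \<in> U l) \<longrightarrow> 0 \<le> d t w us \<and> d t w us \<le> B"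
    and m: "m \<in> Mrange W U h0 h t" and "u \<in> U t"
  shows "Ccond W h0 h d t m u \<subseteq> {0..B}"
proof
  fix c assume "c \<in> Ccond W h0 h d t m u"
  then obtain w where w: "w \<in> Wm W h0 h m" and c: "c = d t w (snd m @ [u])"
    unfolding Ccond_def by auto
  have len: "length (fst m) = Suc t" "length (snd m) = t" and "\<forall>l<t. snd m ! l \<in> U l"
    using m unfolding Mrange_def by auto
  moreover from len w have "length w = Suc t" "\<forall>l<Suc t. w ! l \<in> W l"
    unfolding Wm_def by auto
  ultimately have "\<forall>l\<le>t. w ! l \<in> W l \<and> (snd m @ [u]) ! l \<in> U l"
    using \<open>u \<in> U t\<close> by (auto simp: nth_append less_Suc_eq_le[symmetric] less_Suc_eq)
  then show "c \<in> {0..B}"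
    using cost \<open>length w = Suc t\<close> len unfolding c by simp
qed

lemma Sup_nonneg_if_subset_atLeastAtMost:
  fixes C :: "real set"
  assumes "C \<noteq> {}" "C \<subseteq> {0..B}"
  shows "0 \<le> Sup C"
proof -
  obtain c where "c \<in> C" using assms(1) by blast
  moreover have "bdd_above C" by (rule bdd_above_mono[OF bdd_above_Icc assms(2)])
  ultimately show ?thesis using assms(2) cSup_upper2[of c C 0] by auto
qed

text \<open>Sup and Inf of real sets that are unbounded above resp. below are unspecified in HOL.
  The cost bound makes the suprema in Q and hat Q genuine, and the resulting nonnegativity of
  Q and hat Q makes the infima in V and hat V genuine.\<close>

lemma Qfun_nonneg:
  assumes "Ccond W h0 h d t m u \<subseteq> {0..B}" and "m \<in> Mrange W U h0 h t"
  shows "0 \<le> Qfun W U h0 h d T t m u"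
proof -
  have "Ccond W h0 h d t m u \<noteq> {}"
    using assms(2) unfolding Mrange_def Ccond_def by auto
  then have "0 \<le> Sup (Ccond W h0 h d t m u)"
    using assms(1) by (rule Sup_nonneg_if_subset_atLeastAtMost)
  then show ?thesis unfolding Qfun_def by (rule max.coboundedI1)
qed

lemma Qhat_nonneg:
  assumes "\<And>m'. m' \<in> Mrange W U h0 h t \<Longrightarrow> Ccond W h0 h d t m' u \<subseteq> {0..B}"
    and "m \<in> Mrange W U h0 h t"
  shows "0 \<le> Qhat W U h0 h d \<sigma> T t (\<sigma> t m) u"
proof -
  have "Ccond W h0 h d t m u \<subseteq> CcondPi W U h0 h d \<sigma> t (\<sigma> t m) u"
    using assms(2) unfolding CcondPi_def Mofpi_def by blast
  moreover have "Ccond W h0 h d t m u \<noteq> {}"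
    using assms(2) unfolding Mrange_def Ccond_def by auto
  moreover have "CcondPi W U h0 h d \<sigma> t (\<sigma> t m) u \<subseteq> {0..B}"
    using assms(1) unfolding CcondPi_def Mofpi_def by blast
  ultimately have "0 \<le> Sup (CcondPi W U h0 h d \<sigma> t (\<sigma> t m) u)"
    by (intro Sup_nonneg_if_subset_atLeastAtMost) auto
  then show ?thesis unfolding Qhat_def by (rule max.coboundedI1)
qed

lemma Vfun_eq_INF_Qfun:
  assumes "t \<le> T"
  shows "Vfun W U h0 h d T t m = (INF u\<in>U t. Qfun W U h0 h d T t m u)"
proof -
  have "Suc T - t = Suc (T - t)" "T - (T - t) = t" "Suc T - Suc t = T - t"
    using assms by auto
  then show ?thesis unfolding Vfun_def Qfun_def by simp
qed

lemma Vhat_eq_INF_Qhat: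
  assumes "t \<le> T"
  shows "Vhat W U h0 h d \<sigma> T t p = (INF u\<in>U t. Qhat W U h0 h d \<sigma> T t p u)"
proof -
  have "Suc T - t = Suc (T - t)" "T - (T - t) = t" "Suc T - Suc t = T - t"
    using assms by auto
  then show ?thesis unfolding Vhat_def Qhat_def by simp
qed

lemma Qfun_Qhat_diff_le:
  fixes \<sigma> :: "nat \<Rightarrow> ('y, 'u) mem \<Rightarrow> 'p::metric_space"
  assumes "W (Suc t) \<noteq> {}" and m: "m \<in> Mrange W U h0 h t" and "u \<in> U t"
    and bounded: "bounded (Pirange W U h0 h \<sigma> (Suc t))"
    and lip: "L-lipschitz_on (Pirange W U h0 h \<sigma> (Suc t)) (Vhat W U h0 h d \<sigma> T (Suc t))"
    and cost: "\<bar>Sup (Ccond W h0 h d t m u) - Sup (CcondPi W U h0 h d \<sigma> t (\<sigma> t m) u)\<bar> \<le> \<epsilon>"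
    and hd: "hausdorff (Pinext W h0 h \<sigma> t m u) (PinextPi W U h0 h \<sigma> t (\<sigma> t m) u) \<le> \<delta>"
    and V: "\<And>m'. m' \<in> Mrange W U h0 h (Suc t) \<Longrightarrow>
      \<bar>Vfun W U h0 h d T (Suc t) m' - Vhat W U h0 h d \<sigma> T (Suc t) (\<sigma> (Suc t) m')\<bar> \<le> a"
  shows "\<bar>Qfun W U h0 h d T t m u - Qhat W U h0 h d \<sigma> T t (\<sigma> t m) u\<bar> \<le> max \<epsilon> (a + L * \<delta>)"
proof -
  define P where "P = Pirange W U h0 h \<sigma> (Suc t)"
  define f where "f = Vhat W U h0 h d \<sigma> T (Suc t)"
  define Mn where "Mn = Mnext W h0 h t m u"
  define Pn where "Pn = Pinext W h0 h \<sigma> t m u"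
  define Pn' where "Pn' = PinextPi W U h0 h \<sigma> t (\<sigma> t m) u"
  have Mn: "Mn \<subseteq> Mrange W U h0 h (Suc t)" "Mn \<noteq> {}"
    unfolding Mn_def using Mnext_subset_Mrange[OF assms(1-3)] Mnext_nonempty[OF m] by auto
  have Pn: "Pn = \<sigma> (Suc t) ` Mn" "Pn \<subseteq> P" "Pn \<noteq> {}"
    using Mn unfolding Pn_def Mn_def P_def Pinext_def Pirange_def by auto
  have Pn': "Pn' \<subseteq> P" "Pn' \<noteq> {}"
    using Mnext_subset_Mrange[of W t _ U h0 h u] assms(1,3) Pn m
    unfolding Pn'_def Pn_def P_def PinextPi_def Pinext_def Pirange_def Mofpi_def by blast+
  have "bdd_above (f ` Pn)"
    using lipschitz_on_bounded_image[OF lip[folded P_def f_def] bounded[folded P_def]] Pn(2)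
    by (meson bounded_imp_bdd_above bdd_above_mono image_mono)
  then have "\<bar>(SUP m'\<in>Mn. Vfun W U h0 h d T (Suc t) m') - Sup (f ` Pn)\<bar> \<le> a"
    unfolding Pn(1) image_image using V Mn unfolding f_def by (intro abs_SUP_diff_le) auto
  moreover have "\<bar>Sup (f ` Pn) - Sup (f ` Pn')\<bar> \<le> L * \<delta>"
  proof -
    have "\<bar>Sup (f ` Pn) - Sup (f ` Pn')\<bar> \<le> L * hausdorff Pn Pn'"
      using lip bounded Pn Pn' unfolding P_def f_def by (intro abs_SUP_diff_le_hausdorff) auto
    also have "\<dots> \<le> L * \<delta>"
      using hd lipschitz_on_nonneg[OF lip] unfolding Pn_def Pn'_def by (rule mult_left_mono)
    finally show ?thesis .
  qed
  ultimately have "\<bar>(SUP m'\<in>Mn. Vfun W U h0 h d T (Suc t) m') - Sup (f ` Pn')\<bar> \<le> a + L * \<delta>"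
    by linarith
  then show ?thesis
    using abs_max_diff_le[of "Sup (Ccond W h0 h d t m u)"] cost
    unfolding Qfun_def Qhat_def Mn_def f_def Pn'_def by (smt (verit))
qed

lemma Vfun_Vhat_diff_le:
  assumes "t \<le> T" and "U t \<noteq> {}"
    and cost: "\<And>m' u. m' \<in> Mrange W U h0 h t \<Longrightarrow> u \<in> U t \<Longrightarrow> Ccond W h0 h d t m' u \<subseteq> {0..B}"
    and m: "m \<in> Mrange W U h0 h t"
    and Q: "\<And>u. u \<in> U t \<Longrightarrow> \<bar>Qfun W U h0 h d T t m u - Qhat W U h0 h d \<sigma> T t (\<sigma> t m) u\<bar> \<le> a"
  shows "\<bar>Vfun W U h0 h d T t m - Vhat W U h0 h d \<sigma> T t (\<sigma> t m)\<bar> \<le> a"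
  unfolding Vfun_eq_INF_Qfun[OF \<open>t \<le> T\<close>] Vhat_eq_INF_Qhat[OF \<open>t \<le> T\<close>]
proof (rule abs_INF_diff_le[OF \<open>U t \<noteq> {}\<close> Q])
  show "bdd_below ((\<lambda>u. Qfun W U h0 h d T t m u) ` U t)"
    using Qfun_nonneg[OF cost[OF m] m] by (intro bdd_belowI2) auto
  show "bdd_below ((\<lambda>u. Qhat W U h0 h d \<sigma> T t (\<sigma> t m) u) ` U t)"
    using Qhat_nonneg[OF cost m] by (intro bdd_belowI2) auto
qed

theorem theorem3:
  fixes W :: "nat \<Rightarrow> 'w set" and U :: "nat \<Rightarrow> 'u set"
    and h0 :: "'w \<Rightarrow> 'y" and h :: "nat \<Rightarrow> 'w list \<Rightarrow> 'u list \<Rightarrow> 'y"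
    and d :: "nat \<Rightarrow> 'w list \<Rightarrow> 'u list \<Rightarrow> real"
    and \<sigma> :: "nat \<Rightarrow> ('y, 'u) mem \<Rightarrow> 'p::metric_space"
    and T :: nat and \<epsilon> \<delta> lam L \<alpha> :: "nat \<Rightarrow> real"
  assumes W_ne: "\<And>t. W t \<noteq> {}"
    and U_ne: "\<And>t. U t \<noteq> {}"
    and cost_bounded: "\<And>t. \<exists>B. \<forall>w us. length w = Suc t \<and> length us = Suc t
          \<and> (\<forall>l\<le>t. w ! l \<in> W l \<and> us ! l \<in> U l) \<longrightarrow> 0 \<le> d t w us \<and> d t w us \<le> B"
    and AIS: "is_AIS W U h0 h d \<sigma> T \<epsilon> \<delta> lam"
    and L_last: "L (Suc T) = 0"
    and L_lip: "\<And>t. t \<le> T \<Longrightarrow>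
          (L (Suc t))-lipschitz_on (Pirange W U h0 h \<sigma> (Suc t)) (Vhat W U h0 h d \<sigma> T (Suc t))"
    and alpha_last: "\<alpha> (Suc T) = 0"
    and alpha_rec: "\<And>t. t \<le> T \<Longrightarrow> \<alpha> t = max (\<epsilon> t) (\<alpha> (Suc t) + L (Suc t) * \<delta> t)"
  shows "\<forall>t\<le>T. \<forall>m\<in>Mrange W U h0 h t. \<forall>u\<in>U t.
           \<bar>Qfun W U h0 h d T t m u - Qhat W U h0 h d \<sigma> T t (\<sigma> t m) u\<bar> \<le> \<alpha> t
         \<and> \<bar>Vfun W U h0 h d T t m - Vhat W U h0 h d \<sigma> T t (\<sigma> t m)\<bar> \<le> \<alpha> t"
proof -
  obtain B where "\<And>t. \<forall>w us. length w = Suc t \<and> length us = Suc t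
      \<and> (\<forall>l\<le>t. w ! l \<in> W l \<and> us ! l \<in> U l) \<longrightarrow> 0 \<le> d t w us \<and> d t w us \<le> B t"
    using cost_bounded by metis
  then have cost: "\<And>t m u. m \<in> Mrange W U h0 h t \<Longrightarrow> u \<in> U t \<Longrightarrow>
      Ccond W h0 h d t m u \<subseteq> {0..B t}"
    by (rule Ccond_subset_cost_bounds)
  have bounded: "\<And>t. bounded (Pirange W U h0 h \<sigma> t)"
    and AIS_step: "\<And>t m u. t \<le> T \<Longrightarrow> m \<in> Mrange W U h0 h t \<Longrightarrow> u \<in> U t \<Longrightarrow>
      \<bar>Sup (Ccond W h0 h d t m u) - Sup (CcondPi W U h0 h d \<sigma> t (\<sigma> t m) u)\<bar> \<le> \<epsilon> t \<and>
      hausdorff (Pinext W h0 h \<sigma> t m u) (PinextPi W U h0 h \<sigma> t (\<sigma> t m) u) \<le> \<delta> t"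
    using AIS unfolding is_AIS_def by blast+
  define V_close where "V_close t \<longleftrightarrow> (\<forall>m\<in>Mrange W U h0 h t.
      \<bar>Vfun W U h0 h d T t m - Vhat W U h0 h d \<sigma> T t (\<sigma> t m)\<bar> \<le> \<alpha> t)" for t
  have Q_close: "\<bar>Qfun W U h0 h d T t m u - Qhat W U h0 h d \<sigma> T t (\<sigma> t m) u\<bar> \<le> \<alpha> t"
    if t: "t \<le> T" and V: "V_close (Suc t)" and m: "m \<in> Mrange W U h0 h t" and u: "u \<in> U t"
    for t m u
  proof -
    have "\<bar>Qfun W U h0 h d T t m u - Qhat W U h0 h d \<sigma> T t (\<sigma> t m) u\<bar>
        \<le> max (\<epsilon> t) (\<alpha> (Suc t) + L (Suc t) * \<delta> t)"
      using AIS_step[OF t m u] V unfolding V_close_def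
      by (intro Qfun_Qhat_diff_le[OF W_ne m u bounded L_lip[OF t]]) auto
    then show ?thesis using alpha_rec[OF t] by simp
  qed
  have "V_close t" if "t \<le> Suc T" for t
    using that
  proof (induction rule: inc_induct)
    case base
    then show ?case by (simp add: V_close_def Vfun_def Vhat_def alpha_last)
  next
    case (step t)
    then have "t \<le> T" by simp
    show ?case
      unfolding V_close_def
    proof
      fix m assume m: "m \<in> Mrange W U h0 h t"
      show "\<bar>Vfun W U h0 h d T t m - Vhat W U h0 h d \<sigma> T t (\<sigma> t m)\<bar> \<le> \<alpha> t"
        by (rule Vfun_Vhat_diff_le[OF \<open>t \<le> T\<close> U_ne cost m Q_close[OF \<open>t \<le> T\<close> step.IH m]])
    qed
  qed
  then show ?thesis
    using Q_close by (simp add: V_close_def)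
qed

end
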